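(* Let $(\mathcal D,\mathcal C)$ be a $\mathtt{CGTPDL}$ proof. Then for every sequent $\Gamma\Rightarrow\Delta$ occurring in the derivation tree $\mathcal D$ and every model $M$, $M\models\Gamma\Rightarrow\Delta$.
   Context: Fix sets $\mathsf{Prop}$ and $\mathsf{AtProg}$. $\mathtt{TPDL}$ formulas/programs: $\varphi ::= \bot \mid p \mid (\varphi\to\varphi) \mid [\pi]\varphi \mid [\pi]^{\leftarrow}\varphi$, $\pi ::= \alpha \mid \pi;\pi \mid \pi\cup\pi \mid \pi^{*} \mid \varphi?$. $[\pi]\Gamma=\{[\pi]\varphi:\varphi\in\Gamma\}$, similarly $[\pi]^{\leftarrow}\Gamma$. Model $M=(W,(R_\alpha),V)$, $W\neq\emptyset$; $R_{\pi_0;\pi_1}$ composition, $R_{\pi_0\cup\pi_1}$ union, $R_{\pi^*}$ reflexive–transitive closure, $R_{\psi?}=\{(w,w):M,w\models\psi\}$; $M,w\models p$ iff $p\in V(w)$, $\bot$ false, $\to$ classical, $[\pi]\varphi$ true at $w$ iff $\varphi$ true at all $R_\pi$-successors, $[\pi]^{\leftarrow}\varphi$ true at $w$ iff $\varphi$ true at all $R_\pi$-predecessors. Sequents are pairs of finite sets of formulas; $M\models\Gamma\Rightarrow\Delta$ means at every state where all of $\Gamma$ hold some formula of $\Delta$ holds. $\mathtt{CGTPDL}$ rules (premises / conclusion): (Ax) / $\Gamma\Rightarrow\Delta$, $\Gamma\cap\Delta\neq\emptyset$; ($\bot$) / $\Gamma,\bot\Rightarrow\Delta$; ($\to$L) $\Gamma\Rightarrow\varphi,\Delta$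 and $\Gamma,\psi\Rightarrow\Delta$ / $\Gamma,\varphi\to\psi\Rightarrow\Delta$; ($\to$R) $\Gamma,\varphi\Rightarrow\psi,\Delta$ / $\Gamma\Rightarrow\varphi\to\psi,\Delta$; (Wk) $\Gamma\Rightarrow\Delta$ / $\Gamma'\Rightarrow\Delta'$, $\Gamma\subseteq\Gamma'$, $\Delta\subseteq\Delta'$; (Cut) $\Gamma\Rightarrow\varphi,\Delta$ and $\Gamma,\varphi\Rightarrow\Delta$ / $\Gamma\Rightarrow\Delta$; ($[\,]$) $\Gamma\Rightarrow\varphi,[\pi]^{\leftarrow}\Delta$ / $[\pi]\Gamma\Rightarrow[\pi]\varphi,\Delta$; ($[\,]^{\leftarrow}$) $\Gamma\Rightarrow\varphi,[\pi]\Delta$ / $[\pi]^{\leftarrow}\Gamma\Rightarrow[\pi]^{\leftarrow}\varphi,\Delta$; ($[;]$L) $\Gamma,[\pi_0][\pi_1]\varphi\Rightarrow\Delta$ / $\Gamma,[\pi_0;\pi_1]\varphi\Rightarrow\Delta$; ($[;]$R) $\Gamma\Rightarrow[\pi_0][\pi_1]\varphi,\Delta$ / $\Gamma\Rightarrow[\pi_0;\pi_1]\varphi,\Delta$; ($[\cup]$L) $\Gamma,[\pi_0]\varphi,[\pi_1]\varphi\Rightarrow\Delta$ / $\Gamma,[\pi_0\cup\pi_1]\varphi\Rightarrow\Delta$; ($[\cup]$R) $\Gamma\Rightarrow\Delta,[\pi_0]\varphi$ and $\Gamma\Rightarrow\Delta,[\pi_1]\varphi$ / $\Gamma\Rightarrow[\pi_0\cup\pi_1]\varphi,\Delta$;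 ($[*]$L) $\Gamma,\varphi,[\pi][\pi^*]\varphi\Rightarrow\Delta$ / $\Gamma,[\pi^*]\varphi\Rightarrow\Delta$; ($[?]$L) $\Gamma\Rightarrow\varphi,\Delta$ and $\Gamma,\psi\Rightarrow\Delta$ / $\Gamma,[\varphi?]\psi\Rightarrow\Delta$; ($[?]$R) $\Gamma,\varphi\Rightarrow\psi,\Delta$ / $\Gamma\Rightarrow[\varphi?]\psi,\Delta$; (C-s) $\Gamma\Rightarrow\varphi,\Delta$ and $\Gamma\Rightarrow[\pi][\pi^*]\varphi,\Delta$ / $\Gamma\Rightarrow[\pi^*]\varphi,\Delta$. A pre-proof $(\mathcal D,\mathcal C)$: $\mathcal D$ a finite tree of sequents built of rule instances whose leaves are Ax/$\bot$ instances or buds; $\mathcal C$ assigns each bud a companion, an inner node with the same sequent. The derivation graph identifies buds with companions; a path is a sequence of nodes each a premise of the previous one's rule instance. A trace following a path $(\Gamma_i\Rightarrow\Delta_i)$ is $(\tau_i)$ with $\tau_i\in\Delta_i$ such that: at ($\to$R), ($[;]$R), ($[\cup]$R), ($[?]$R), (C-s) either $\tau_{i+1}=\tau_i$, or $\tau_i$ is the principal formula and $\tau_{i+1}$ is its immediate component in the chosen premise (respectively $\psi$ for $\varphi\to\psi$; $[\pi_0][\pi_1]\varphi$; $[\pi_j]\varphi$ for the premise containing it; $\psi$ for $[\varphi?]\psi$; $\varphi$ or $[\pi][\pi^*]\varphi$ for $[\pi^*]\varphi$, the latter being a progress point); at ($[\,]$) and ($[\,]^{\leftarrow}$), $\tau_i$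 is the principal formula $[\pi]\varphi$ resp. $[\pi]^{\leftarrow}\varphi$ and $\tau_{i+1}=\varphi$; at all other rules $\tau_{i+1}=\tau_i$. The global trace condition requires every infinite path to have a tail followed by a trace with infinitely many progress points. A $\mathtt{CGTPDL}$ proof is a pre-proof whose derivation graph satisfies the global trace condition. *)

theory Defs
  imports Main "HOL-Library.Infinite_Set"
begin

datatype ('p,'a) fm =
    Bot
  | Atom 'p
  | Imp "('p,'a) fm" "('p,'a) fm"
  | Box "('p,'a) prog" "('p,'a) fm"
  | BoxC "('p,'a) prog" "('p,'a) fm"
and ('p,'a) prog =
    At 'a
  | Seq "('p,'a) prog" "('p,'a) prog"
  | Choice "('p,'a) prog" "('p,'a) prog"
  | Star "('p,'a) prog"
  | Test "('p,'a) fm"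

fun sat :: "('a \<Rightarrow> ('w \<times> 'w) set) \<Rightarrow> ('w \<Rightarrow> 'p set) \<Rightarrow> 'w \<Rightarrow> ('p,'a) fm \<Rightarrow> bool"
and rel :: "('a \<Rightarrow> ('w \<times> 'w) set) \<Rightarrow> ('w \<Rightarrow> 'p set) \<Rightarrow> ('p,'a) prog \<Rightarrow> ('w \<times> 'w) set"
where
  "sat R V w Bot = False"
| "sat R V w (Atom p) = (p \<in> V w)"
| "sat R V w (Imp \<phi> \<psi>) = (sat R V w \<phi> \<longrightarrow> sat R V w \<psi>)"
| "sat R V w (Box \<pi> \<phi>) = (\<forall>v. (w, v) \<in> rel R V \<pi> \<longrightarrow> sat R V v \<phi>)"
| "sat R V w (BoxC \<pi> \<phi>) = (\<forall>v. (v, w) \<in> rel R V \<pi> \<longrightarrow> sat R V v \<phi>)"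
| "rel R V (At \<alpha>) = R \<alpha>"
| "rel R V (Seq \<pi>0 \<pi>1) = rel R V \<pi>0 O rel R V \<pi>1"
| "rel R V (Choice \<pi>0 \<pi>1) = rel R V \<pi>0 \<union> rel R V \<pi>1"
| "rel R V (Star \<pi>) = (rel R V \<pi>)\<^sup>*"
| "rel R V (Test \<phi>) = {(w, w) | w. sat R V w \<phi>}"

type_synonym ('p,'a) sequent = "('p,'a) fm set \<times> ('p,'a) fm set"

definition valid_seq :: "('a \<Rightarrow> ('w \<times> 'w) set) \<Rightarrow> ('w \<Rightarrow> 'p set) \<Rightarrow> ('p,'a) sequent \<Rightarrow> bool" where
  "valid_seq R V S \<longleftrightarrow>
     (\<forall>w. (\<forall>\<phi>\<in>fst S. sat R V w \<phi>) \<longrightarrow> (\<exists>\<psi>\<in>snd S. sat R V w \<psi>))"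

section \<open>Rules of CGTPDL (labels record the principal formula)\<close>

datatype ('p,'a) rl =
    RAx | RBot
  | RImpL "('p,'a) fm" "('p,'a) fm" | RImpR "('p,'a) fm" "('p,'a) fm"
  | RWk | RCut "('p,'a) fm"
  | RBox "('p,'a) prog" "('p,'a) fm" | RBoxC "('p,'a) prog" "('p,'a) fm"
  | RSeqL "('p,'a) prog" "('p,'a) prog" "('p,'a) fm"
  | RSeqR "('p,'a) prog" "('p,'a) prog" "('p,'a) fm"
  | RChoiceL "('p,'a) prog" "('p,'a) prog" "('p,'a) fm"
  | RChoiceR "('p,'a) prog" "('p,'a) prog" "('p,'a) fm"
  | RStarL "('p,'a) prog" "('p,'a) fm"
  | RTestL "('p,'a) fm" "('p,'a) fm" | RTestR "('p,'a) fm" "('p,'a) fm"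
  | RCS "('p,'a) prog" "('p,'a) fm"

text \<open>rule_inst r prems concl: (prems, concl) is an instance of rule r,
  premises listed in the order of the paper.\<close>

fun rule_inst :: "('p,'a) rl \<Rightarrow> ('p,'a) sequent list \<Rightarrow> ('p,'a) sequent \<Rightarrow> bool" where
  "rule_inst RAx ps c = (ps = [] \<and> fst c \<inter> snd c \<noteq> {})"
| "rule_inst RBot ps c = (ps = [] \<and> Bot \<in> fst c)"
| "rule_inst (RImpL \<phi> \<psi>) ps c = (\<exists>\<Gamma> \<Delta>. c = (insert (Imp \<phi> \<psi>) \<Gamma>, \<Delta>) \<and>
      ps = [(\<Gamma>, insert \<phi> \<Delta>), (insert \<psi> \<Gamma>, \<Delta>)])"
| "rule_inst (RImpR \<phi> \<psi>) ps c = (\<exists>\<Gamma> \<Delta>. c = (\<Gamma>, insert (Imp \<phi> \<psi>) \<Delta>) \<and>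
      ps = [(insert \<phi> \<Gamma>, insert \<psi> \<Delta>)])"
| "rule_inst RWk ps c = (\<exists>\<Gamma> \<Delta>. ps = [(\<Gamma>, \<Delta>)] \<and> \<Gamma> \<subseteq> fst c \<and> \<Delta> \<subseteq> snd c)"
| "rule_inst (RCut \<phi>) ps c = (\<exists>\<Gamma> \<Delta>. c = (\<Gamma>, \<Delta>) \<and>
      ps = [(\<Gamma>, insert \<phi> \<Delta>), (insert \<phi> \<Gamma>, \<Delta>)])"
| "rule_inst (RBox \<pi> \<phi>) ps c = (\<exists>\<Gamma> \<Delta>. c = (Box \<pi> ` \<Gamma>, insert (Box \<pi> \<phi>) \<Delta>) \<and>
      ps = [(\<Gamma>, insert \<phi> (BoxC \<pi> ` \<Delta>))])"
| "rule_inst (RBoxC \<pi> \<phi>) ps c = (\<exists>\<Gamma> \<Delta>. c = (BoxC \<pi> ` \<Gamma>, insert (BoxC \<pi> \<phi>) \<Delta>) \<and>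
      ps = [(\<Gamma>, insert \<phi> (Box \<pi> ` \<Delta>))])"
| "rule_inst (RSeqL \<pi>0 \<pi>1 \<phi>) ps c = (\<exists>\<Gamma> \<Delta>. c = (insert (Box (Seq \<pi>0 \<pi>1) \<phi>) \<Gamma>, \<Delta>) \<and>
      ps = [(insert (Box \<pi>0 (Box \<pi>1 \<phi>)) \<Gamma>, \<Delta>)])"
| "rule_inst (RSeqR \<pi>0 \<pi>1 \<phi>) ps c = (\<exists>\<Gamma> \<Delta>. c = (\<Gamma>, insert (Box (Seq \<pi>0 \<pi>1) \<phi>) \<Delta>) \<and>
      ps = [(\<Gamma>, insert (Box \<pi>0 (Box \<pi>1 \<phi>)) \<Delta>)])"
| "rule_inst (RChoiceL \<pi>0 \<pi>1 \<phi>) ps c = (\<exists>\<Gamma> \<Delta>. c = (insert (Box (Choice \<pi>0 \<pi>1) \<phi>) \<Gamma>, \<Delta>) \<and>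
      ps = [(insert (Box \<pi>0 \<phi>) (insert (Box \<pi>1 \<phi>) \<Gamma>), \<Delta>)])"
| "rule_inst (RChoiceR \<pi>0 \<pi>1 \<phi>) ps c = (\<exists>\<Gamma> \<Delta>. c = (\<Gamma>, insert (Box (Choice \<pi>0 \<pi>1) \<phi>) \<Delta>) \<and>
      ps = [(\<Gamma>, insert (Box \<pi>0 \<phi>) \<Delta>), (\<Gamma>, insert (Box \<pi>1 \<phi>) \<Delta>)])"
| "rule_inst (RStarL \<pi> \<phi>) ps c = (\<exists>\<Gamma> \<Delta>. c = (insert (Box (Star \<pi>) \<phi>) \<Gamma>, \<Delta>) \<and>
      ps = [(insert \<phi> (insert (Box \<pi> (Box (Star \<pi>) \<phi>)) \<Gamma>), \<Delta>)])"
| "rule_inst (RTestL \<phi> \<psi>) ps c = (\<exists>\<Gamma> \<Delta>. c = (insert (Box (Test \<phi>) \<psi>) \<Gamma>, \<Delta>) \<and>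
      ps = [(\<Gamma>, insert \<phi> \<Delta>), (insert \<psi> \<Gamma>, \<Delta>)])"
| "rule_inst (RTestR \<phi> \<psi>) ps c = (\<exists>\<Gamma> \<Delta>. c = (\<Gamma>, insert (Box (Test \<phi>) \<psi>) \<Delta>) \<and>
      ps = [(insert \<phi> \<Gamma>, insert \<psi> \<Delta>)])"
| "rule_inst (RCS \<pi> \<phi>) ps c = (\<exists>\<Gamma> \<Delta>. c = (\<Gamma>, insert (Box (Star \<pi>) \<phi>) \<Delta>) \<and>
      ps = [(\<Gamma>, insert \<phi> \<Delta>), (\<Gamma>, insert (Box \<pi> (Box (Star \<pi>) \<phi>)) \<Delta>)])"

text \<open>trace_step r j tau tau': the trace may go from tau (in the conclusion of
  the rule instance r) to tau' (in its j-th premise, counting from 0).\<close>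

fun trace_step :: "('p,'a) rl \<Rightarrow> nat \<Rightarrow> ('p,'a) fm \<Rightarrow> ('p,'a) fm \<Rightarrow> bool" where
  "trace_step (RImpR \<phi> \<psi>) j \<tau> \<tau>' = (\<tau>' = \<tau> \<or> (\<tau> = Imp \<phi> \<psi> \<and> \<tau>' = \<psi>))"
| "trace_step (RSeqR \<pi>0 \<pi>1 \<phi>) j \<tau> \<tau>' =
     (\<tau>' = \<tau> \<or> (\<tau> = Box (Seq \<pi>0 \<pi>1) \<phi> \<and> \<tau>' = Box \<pi>0 (Box \<pi>1 \<phi>)))"
| "trace_step (RChoiceR \<pi>0 \<pi>1 \<phi>) j \<tau> \<tau>' =
     (\<tau>' = \<tau> \<or> (\<tau> = Box (Choice \<pi>0 \<pi>1) \<phi> \<and> \<tau>' = (if j = 0 then Box \<pi>0 \<phi> else Box \<pi>1 \<phi>)))"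
| "trace_step (RTestR \<phi> \<psi>) j \<tau> \<tau>' = (\<tau>' = \<tau> \<or> (\<tau> = Box (Test \<phi>) \<psi> \<and> \<tau>' = \<psi>))"
| "trace_step (RCS \<pi> \<phi>) j \<tau> \<tau>' =
     (\<tau>' = \<tau> \<or> (\<tau> = Box (Star \<pi>) \<phi> \<and> \<tau>' = (if j = 0 then \<phi> else Box \<pi> (Box (Star \<pi>) \<phi>))))"
| "trace_step (RBox \<pi> \<phi>) j \<tau> \<tau>' = (\<tau> = Box \<pi> \<phi> \<and> \<tau>' = \<phi>)"
| "trace_step (RBoxC \<pi> \<phi>) j \<tau> \<tau>' = (\<tau> = BoxC \<pi> \<phi> \<and> \<tau>' = \<phi>)"
| "trace_step _ j \<tau> \<tau>' = (\<tau>' = \<tau>)"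

fun progress :: "('p,'a) rl \<Rightarrow> nat \<Rightarrow> ('p,'a) fm \<Rightarrow> ('p,'a) fm \<Rightarrow> bool" where
  "progress (RCS \<pi> \<phi>) j \<tau> \<tau>' =
     (j = 1 \<and> \<tau> = Box (Star \<pi>) \<phi> \<and> \<tau>' = Box \<pi> (Box (Star \<pi>) \<phi>))"
| "progress _ j \<tau> \<tau>' = False"

text \<open>Inner nodes (and Ax/Bot leaves) carry a sequent, a rule label and the list of
  premise subtrees; a bud carries its sequent and the address (path of child
  indices from the root) of its companion.\<close>

datatype ('p,'a) ptree =
    Bud "('p,'a) sequent" "nat list"
  | Inf "('p,'a) sequent" "('p,'a) rl" "('p,'a) ptree list"

fun seq_of :: "('p,'a) ptree \<Rightarrow> ('p,'a) sequent" where
  "seq_of (Bud s c) = s"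
| "seq_of (Inf s r ts) = s"

fun subtree :: "('p,'a) ptree \<Rightarrow> nat list \<Rightarrow> ('p,'a) ptree option" where
  "subtree t [] = Some t"
| "subtree t (j # p) = (case t of
      Inf s r ts \<Rightarrow> (if j < length ts then subtree (ts ! j) p else None)
    | Bud s c \<Rightarrow> None)"

definition pre_proof :: "('p,'a) ptree \<Rightarrow> bool" where
  "pre_proof T \<longleftrightarrow>
     (\<forall>p s r ts. subtree T p = Some (Inf s r ts) \<longrightarrow>
         finite (fst s) \<and> finite (snd s) \<and> rule_inst r (map seq_of ts) s) \<and>
     (\<forall>p s c. subtree T p = Some (Bud s c) \<longrightarrow>
         (\<exists>r ts. ts \<noteq> [] \<and> subtree T c = Some (Inf s r ts)))"

text \<open>Derivation graph: vertices are addresses of non-bud nodes; an edge from p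
  via premise j goes to the j-th child, or to its companion if that child is a bud.\<close>

definition dg_edge :: "('p,'a) ptree \<Rightarrow> nat list \<Rightarrow> nat \<Rightarrow> nat list \<Rightarrow> bool" where
  "dg_edge T p j q \<longleftrightarrow>
     (\<exists>s r ts. subtree T p = Some (Inf s r ts) \<and> j < length ts \<and>
        (case ts ! j of Inf _ _ _ \<Rightarrow> q = p @ [j] | Bud _ c \<Rightarrow> q = c))"

definition node_seq :: "('p,'a) ptree \<Rightarrow> nat list \<Rightarrow> ('p,'a) sequent" where
  "node_seq T p = seq_of (the (subtree T p))"

definition node_rule :: "('p,'a) ptree \<Rightarrow> nat list \<Rightarrow> ('p,'a) rl" where
  "node_rule T p = (case the (subtree T p) of Inf s r ts \<Rightarrow> r | Bud s c \<Rightarrow> RAx)"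

definition global_trace_condition :: "('p,'a) ptree \<Rightarrow> bool" where
  "global_trace_condition T \<longleftrightarrow>
     (\<forall>ns ks. (\<forall>i. dg_edge T (ns i) (ks i) (ns (Suc i))) \<longrightarrow>
        (\<exists>m \<tau>. (\<forall>i\<ge>m. \<tau> i \<in> snd (node_seq T (ns i)) \<and>
                      trace_step (node_rule T (ns i)) (ks i) (\<tau> i) (\<tau> (Suc i))) \<and>
               (\<exists>\<^sub>\<infinity>i. m \<le> i \<and> progress (node_rule T (ns i)) (ks i) (\<tau> i) (\<tau> (Suc i)))))"

definition cgtpdl_proof :: "('p,'a) ptree \<Rightarrow> bool" where
  "cgtpdl_proof T \<longleftrightarrow> pre_proof T \<and> global_trace_condition T"

end

(*
  Suppose a sequent of the proof fails at a state w of some model.  Every false formula has a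
  finite refutation, which unfolds a box over a starred program only finitely often; let its
  refutation height be the least height of such a refutation.  Each rule reflects falsity: if its
  conclusion fails at w, then some premise fails at w or, for the modal rules, at a state related
  to w, and the premise can be chosen so that the refutation height never grows along a trace step
  and strictly drops at every progress point ([\<pi>*]\<phi> to [\<pi>][\<pi>*]\<phi> in C-s).  Iterating
  this from the failing sequent, and jumping from buds to their companions, yields an infinite path
  of the derivation graph.  The global trace condition puts a trace with infinitely many progress
  points on a tail of that path, and the refutation heights along it would form a non-increasing
  sequence of natural numbers with infinitely many strict decreases.
*)
theory Submission
  imports Defs
begin

lemma sat_Box_Seq: "sat R V w (Box (Seq \<pi>0 \<pi>1) \<phi>) \<longleftrightarrow> sat R V w (Box \<pi>0 (Box \<pi>1 \<phi>))"
  by auto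

lemma sat_Box_Choice:
  "sat R V w (Box (Choice \<pi>0 \<pi>1) \<phi>) \<longleftrightarrow> sat R V w (Box \<pi>0 \<phi>) \<and> sat R V w (Box \<pi>1 \<phi>)"
  by auto

lemma sat_Box_Test: "sat R V w (Box (Test \<phi>) \<psi>) \<longleftrightarrow> (sat R V w \<phi> \<longrightarrow> sat R V w \<psi>)"
  by auto

lemma sat_Box_Star:
  "sat R V w (Box (Star \<pi>) \<phi>) \<longleftrightarrow> sat R V w \<phi> \<and> sat R V w (Box \<pi> (Box (Star \<pi>) \<phi>))"
  by (auto intro: converse_rtrancl_into_rtrancl elim: converse_rtranclE)

lemma no_infinite_descent:
  fixes g :: "nat \<Rightarrow> nat"
  assumes "\<forall>i\<ge>m. g (Suc i) \<le> g i" and "\<exists>\<^sub>\<infinity>i. g (Suc i) < g i"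
  shows False
proof -
  have descend: "g j \<le> g i" if "m \<le> i" "i \<le> j" for i j
    using that(2)
    by (induction j rule: dec_induct) (use assms(1) that(1) in \<open>auto intro: order_trans\<close>)
  have "g i \<noteq> v" if "m \<le> i" for i v
    using that
  proof (induction v arbitrary: i rule: less_induct)
    case (less v)
    show ?case
    proof
      assume "g i = v"
      from assms(2) obtain n where "n > i" "g (Suc n) < g n" unfolding INFM_nat by blast
      with descend[of i n] less.prems \<open>g i = v\<close> have "g (Suc n) < v" by simp
      with less.IH[of "g (Suc n)" "Suc n"] less.prems \<open>n > i\<close> show False by simp
    qed
  qed
  then show False by blast
qed

context
  fixes R :: "'a \<Rightarrow> ('w \<times> 'w) set" and V :: "'w \<Rightarrow> 'p set"
begin

section \<open>Refutations\<close>

text \<open>A box is refuted by decomposing its program exactly as the right rules do, so that each of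
  them lowers the height; no rule decomposes the program of a converse box, so a related state
  refuting its body suffices.\<close>

inductive refuted :: "nat \<Rightarrow> 'w \<Rightarrow> ('p,'a) fm \<Rightarrow> bool" where
  refuted_Bot: "refuted n w Bot"
| refuted_Atom: "p \<notin> V w \<Longrightarrow> refuted n w (Atom p)"
| refuted_Imp: "sat R V w \<phi> \<Longrightarrow> refuted m w \<psi> \<Longrightarrow> m < n \<Longrightarrow> refuted n w (Imp \<phi> \<psi>)"
| refuted_Box_At:
    "(w, v) \<in> R \<alpha> \<Longrightarrow> refuted m v \<phi> \<Longrightarrow> m < n \<Longrightarrow> refuted n w (Box (At \<alpha>) \<phi>)"
| refuted_Box_Seq:
    "refuted m w (Box \<pi>0 (Box \<pi>1 \<phi>)) \<Longrightarrow> m < n \<Longrightarrow> refuted n w (Box (Seq \<pi>0 \<pi>1) \<phi>)"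
| refuted_Box_Choice0:
    "refuted m w (Box \<pi>0 \<phi>) \<Longrightarrow> m < n \<Longrightarrow> refuted n w (Box (Choice \<pi>0 \<pi>1) \<phi>)"
| refuted_Box_Choice1:
    "refuted m w (Box \<pi>1 \<phi>) \<Longrightarrow> m < n \<Longrightarrow> refuted n w (Box (Choice \<pi>0 \<pi>1) \<phi>)"
| refuted_Box_Test:
    "sat R V w \<phi> \<Longrightarrow> refuted m w \<psi> \<Longrightarrow> m < n \<Longrightarrow> refuted n w (Box (Test \<phi>) \<psi>)"
| refuted_Box_Star0:
    "refuted m w \<phi> \<Longrightarrow> m < n \<Longrightarrow> refuted n w (Box (Star \<pi>) \<phi>)"
| refuted_Box_Star1:
    "refuted m w (Box \<pi> (Box (Star \<pi>) \<phi>)) \<Longrightarrow> m < n \<Longrightarrow> refuted n w (Box (Star \<pi>) \<phi>)"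
| refuted_BoxC:
    "(v, w) \<in> rel R V \<pi> \<Longrightarrow> refuted m v \<phi> \<Longrightarrow> m < n \<Longrightarrow> refuted n w (BoxC \<pi> \<phi>)"

lemma refuted_mono: "refuted m w \<phi> \<Longrightarrow> m \<le> n \<Longrightarrow> refuted n w \<phi>"
  by (induction arbitrary: n rule: refuted.induct)
    (auto intro: refuted.intros dest: order.strict_trans2)

lemma refuted_not_sat: "refuted n w \<phi> \<Longrightarrow> \<not> sat R V w \<phi>"
proof (induction rule: refuted.induct)
  case (refuted_Box_Star1 m w \<pi> \<phi> n)
  then show ?case by (simp only: sat_Box_Star) simp
qed auto

lemma refuted_Box_if_rel: "(w, v) \<in> rel R V \<pi> \<Longrightarrow> refuted n v \<phi> \<Longrightarrow> \<exists>k. refuted k w (Box \<pi> \<phi>)"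
proof (induction \<pi> arbitrary: w v n \<phi> rule: prog.induct[where ?P1.0="\<lambda>_. True"])
  case (Seq \<pi>0 \<pi>1)
  then obtain u where "(w, u) \<in> rel R V \<pi>0" "(u, v) \<in> rel R V \<pi>1" by auto
  with Seq obtain k where "refuted k w (Box \<pi>0 (Box \<pi>1 \<phi>))" by blast
  then show ?case by (blast intro: refuted_Box_Seq)
next
  case (Choice \<pi>0 \<pi>1)
  then show ?case by (simp, meson refuted_Box_Choice0 refuted_Box_Choice1 lessI)
next
  case (Star \<pi>)
  from Star.prems(1) have "(w, v) \<in> (rel R V \<pi>)\<^sup>*" by simp
  then show ?case
  proof (induction rule: converse_rtrancl_induct)
    case base
    with Star.prems show ?case by (auto intro: refuted_Box_Star0)
  next
    case (step u u')
    with Star.IH obtain k where "refuted k u (Box \<pi> (Box (Star \<pi>) \<phi>))" by blast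
    then show ?case by (blast intro: refuted_Box_Star1)
  qed
qed (auto intro: refuted.intros)

lemma refuted_if_not_sat: "\<not> sat R V w \<phi> \<Longrightarrow> \<exists>n. refuted n w \<phi>"
proof (induction \<phi> arbitrary: w rule: fm.induct[where ?P2.0="\<lambda>_. True"])
  case (Imp \<phi> \<psi>)
  then show ?case by (simp, meson refuted_Imp lessI)
next
  case (Box \<pi> \<phi>)
  then show ?case by (auto intro: refuted_Box_if_rel)
next
  case (BoxC \<pi> \<phi>)
  then show ?case by (simp, meson refuted_BoxC lessI)
qed (auto intro: refuted.intros)

lemma refuted_BoxD:
  assumes "refuted n w (Box \<pi> \<phi>)"
  shows "\<exists>v. (w, v) \<in> rel R V \<pi> \<and> refuted n v \<phi>"
  using assms
proof (induction n arbitrary: w \<pi> \<phi> rule: less_induct)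
  case (less n)
  from less.prems show ?case
  proof (cases rule: refuted.cases)
    case (refuted_Box_Seq m \<pi>0 \<pi>1)
    then obtain u where "(w, u) \<in> rel R V \<pi>0" "refuted m u (Box \<pi>1 \<phi>)"
      using less.IH by blast
    moreover from this(2) obtain v where "(u, v) \<in> rel R V \<pi>1" "refuted m v \<phi>"
      using less.IH refuted_Box_Seq by blast
    ultimately have "(w, v) \<in> rel R V \<pi>" "refuted n v \<phi>"
      using refuted_Box_Seq by (auto intro: refuted_mono)
    then show ?thesis by blast
  next
    case (refuted_Box_Star1 m \<pi>')
    then obtain u where "(w, u) \<in> rel R V \<pi>'" "refuted m u (Box (Star \<pi>') \<phi>)"
      using less.IH by blast
    moreover from this(2) obtain v where "(u, v) \<in> (rel R V \<pi>')\<^sup>*" "refuted m v \<phi>"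
      using less.IH refuted_Box_Star1 by fastforce
    ultimately have "(w, v) \<in> rel R V \<pi>" "refuted n v \<phi>"
      using refuted_Box_Star1 by (auto intro: refuted_mono converse_rtrancl_into_rtrancl)
    then show ?thesis by blast
  qed (use less.IH refuted_mono in fastforce)+
qed

text \<open>A true formula has no refutation, and its height is an unspecified \<open>LEAST\<close> value.\<close>

definition refutation_height :: "'w \<Rightarrow> ('p,'a) fm \<Rightarrow> nat" where
  "refutation_height w \<phi> = (LEAST n. refuted n w \<phi>)"

lemma refuted_refutation_height: "\<not> sat R V w \<phi> \<Longrightarrow> refuted (refutation_height w \<phi>) w \<phi>"
  unfolding refutation_height_def using refuted_if_not_sat by (rule LeastI_ex)

lemma refutation_height_le: "refuted n w \<phi> \<Longrightarrow> refutation_height w \<phi> \<le> n"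
  unfolding refutation_height_def by (rule Least_le)

lemma refutation_height_less:
  "refuted m w' \<psi> \<Longrightarrow> m < refutation_height w \<phi> \<Longrightarrow> refutation_height w' \<psi> < refutation_height w \<phi>"
  using refutation_height_le by (rule le_less_trans)

lemma refutation_height_Imp:
  "\<not> sat R V w (Imp \<phi> \<psi>) \<Longrightarrow> refutation_height w \<psi> < refutation_height w (Imp \<phi> \<psi>)"
  by (drule refuted_refutation_height, cases rule: refuted.cases)
    (auto intro: refutation_height_less)

lemma refutation_height_Box_Seq:
  "\<not> sat R V w (Box (Seq \<pi>0 \<pi>1) \<phi>) \<Longrightarrow>
    refutation_height w (Box \<pi>0 (Box \<pi>1 \<phi>)) < refutation_height w (Box (Seq \<pi>0 \<pi>1) \<phi>)"
  by (drule refuted_refutation_height, cases rule: refuted.cases)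
    (auto intro: refutation_height_less)

lemma refutation_height_Box_Test:
  "\<not> sat R V w (Box (Test \<phi>) \<psi>) \<Longrightarrow> refutation_height w \<psi> < refutation_height w (Box (Test \<phi>) \<psi>)"
  by (drule refuted_refutation_height, cases rule: refuted.cases)
    (auto intro: refutation_height_less)

lemma refutation_height_Box_Choice:
  assumes "\<not> sat R V w (Box (Choice \<pi>0 \<pi>1) \<phi>)"
  obtains (left) "\<not> sat R V w (Box \<pi>0 \<phi>)"
      "refutation_height w (Box \<pi>0 \<phi>) < refutation_height w (Box (Choice \<pi>0 \<pi>1) \<phi>)"
    | (right) "\<not> sat R V w (Box \<pi>1 \<phi>)"
      "refutation_height w (Box \<pi>1 \<phi>) < refutation_height w (Box (Choice \<pi>0 \<pi>1) \<phi>)"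
  using refuted_refutation_height[OF assms]
  by (cases rule: refuted.cases) (auto intro: that refutation_height_less dest: refuted_not_sat)

lemma refutation_height_Box_Star:
  assumes "\<not> sat R V w (Box (Star \<pi>) \<phi>)"
  obtains (here) "\<not> sat R V w \<phi>" "refutation_height w \<phi> < refutation_height w (Box (Star \<pi>) \<phi>)"
    | (step) "\<not> sat R V w (Box \<pi> (Box (Star \<pi>) \<phi>))"
      "refutation_height w (Box \<pi> (Box (Star \<pi>) \<phi>)) < refutation_height w (Box (Star \<pi>) \<phi>)"
  using refuted_refutation_height[OF assms]
  by (cases rule: refuted.cases) (auto intro: that refutation_height_less dest: refuted_not_sat)

lemma refutation_height_BoxC:
  assumes "\<not> sat R V w (BoxC \<pi> \<phi>)"
  obtains v where "(v, w) \<in> rel R V \<pi>" "\<not> sat R V v \<phi>"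
    "refutation_height v \<phi> < refutation_height w (BoxC \<pi> \<phi>)"
  using refuted_refutation_height[OF assms]
  by (cases rule: refuted.cases) (auto intro: that refutation_height_less dest: refuted_not_sat)

lemma refutation_height_Box:
  assumes "\<not> sat R V w (Box \<pi> \<phi>)"
  obtains v where "(w, v) \<in> rel R V \<pi>" "\<not> sat R V v \<phi>"
    "refutation_height v \<phi> \<le> refutation_height w (Box \<pi> \<phi>)"
  using refuted_BoxD[OF refuted_refutation_height[OF assms]]
  by (auto intro: that refutation_height_le dest: refuted_not_sat)

definition falsifies :: "'w \<Rightarrow> ('p,'a) sequent \<Rightarrow> bool" where
  "falsifies w s \<longleftrightarrow> (\<forall>\<phi>\<in>fst s. sat R V w \<phi>) \<and> (\<forall>\<psi>\<in>snd s. \<not> sat R V w \<psi>)"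

lemma not_valid_seq_iff: "\<not> valid_seq R V s \<longleftrightarrow> (\<exists>w. falsifies w s)"
  by (auto simp: valid_seq_def falsifies_def)

definition trace_descends ::
  "('p,'a) rl \<Rightarrow> nat \<Rightarrow> 'w \<Rightarrow> 'w \<Rightarrow> ('p,'a) sequent \<Rightarrow> ('p,'a) sequent \<Rightarrow> bool" where
  "trace_descends r j w w' s s' \<longleftrightarrow>
     (\<forall>\<tau>\<in>snd s. \<forall>\<tau>'\<in>snd s'. trace_step r j \<tau> \<tau>' \<longrightarrow>
        refutation_height w' \<tau>' \<le> refutation_height w \<tau> \<and>
        (progress r j \<tau> \<tau>' \<longrightarrow> refutation_height w' \<tau>' < refutation_height w \<tau>))"

fun passive_rule :: "('p,'a) rl \<Rightarrow> bool" where
  "passive_rule (RImpR _ _) = False"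
| "passive_rule (RSeqR _ _ _) = False"
| "passive_rule (RChoiceR _ _ _) = False"
| "passive_rule (RTestR _ _) = False"
| "passive_rule (RCS _ _) = False"
| "passive_rule (RBox _ _) = False"
| "passive_rule (RBoxC _ _) = False"
| "passive_rule _ = True"

lemma trace_descends_passive: "passive_rule r \<Longrightarrow> trace_descends r j w w s s'"
  by (cases r) (auto simp: trace_descends_def)

definition has_falsified_premise ::
  "('p,'a) rl \<Rightarrow> ('p,'a) sequent list \<Rightarrow> 'w \<Rightarrow> ('p,'a) sequent \<Rightarrow> bool" where
  "has_falsified_premise r ps w s \<longleftrightarrow>
     (\<exists>j w'. j < length ps \<and> falsifies w' (ps ! j) \<and> trace_descends r j w w' s (ps ! j))"

lemma has_falsified_premiseI:
  "falsifies w' (ps ! j) \<Longrightarrow> trace_descends r j w w' s (ps ! j) \<Longrightarrow> j < length ps \<Longrightarrow>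
    has_falsified_premise r ps w s"
  unfolding has_falsified_premise_def by blast

lemma falsified_premise_passive:
  assumes "passive_rule r" "rule_inst r ps s" "falsifies w s"
  shows "has_falsified_premise r ps w s"
proof -
  have "\<exists>j<length ps. falsifies w (ps ! j)"
    using assms
    by (cases r)
      (fastforce simp: falsifies_def sat_Box_Seq sat_Box_Choice sat_Box_Test sat_Box_Star
        less_Suc_eq conj_disj_distribR ex_disj_distrib simp del: sat.simps(4))+
  then show ?thesis
    using trace_descends_passive[OF assms(1)] by (blast intro: has_falsified_premiseI)
qed

lemma progress_trace_step: "progress r j \<tau> \<tau>' \<Longrightarrow> trace_step r j \<tau> \<tau>' \<and> \<tau>' \<noteq> \<tau>"
  by (cases r) auto

lemma trace_descends_principal:
  assumes "\<And>\<tau> \<tau>'. trace_step r j \<tau> \<tau>' \<Longrightarrow> \<tau>' = \<tau> \<or> \<tau> = \<sigma> \<and> \<tau>' = \<sigma>'"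
    and "refutation_height w \<sigma>' < refutation_height w \<sigma>"
  shows "trace_descends r j w w s s'"
  using assms progress_trace_step by (fastforce simp: trace_descends_def)

lemma falsified_premise_ImpR:
  assumes "rule_inst (RImpR \<phi> \<psi>) ps s" "falsifies w s"
  shows "has_falsified_premise (RImpR \<phi> \<psi>) ps w s"
proof -
  obtain \<Gamma> \<Delta> where s: "s = (\<Gamma>, insert (Imp \<phi> \<psi>) \<Delta>)" and ps: "ps = [(insert \<phi> \<Gamma>, insert \<psi> \<Delta>)]"
    using assms(1) by auto
  from assms(2) have "\<not> sat R V w (Imp \<phi> \<psi>)" by (simp add: s falsifies_def)
  have "falsifies w (ps ! 0)" using assms(2) by (auto simp: s ps falsifies_def)
  moreover have "trace_descends (RImpR \<phi> \<psi>) 0 w w s (ps ! 0)"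
    using refutation_height_Imp[OF \<open>\<not> sat R V w (Imp \<phi> \<psi>)\<close>]
    by (rule trace_descends_principal[rotated]) auto
  ultimately show ?thesis by (rule has_falsified_premiseI) (simp add: ps)
qed

lemma falsified_premise_SeqR:
  assumes "rule_inst (RSeqR \<pi>0 \<pi>1 \<phi>) ps s" "falsifies w s"
  shows "has_falsified_premise (RSeqR \<pi>0 \<pi>1 \<phi>) ps w s"
proof -
  obtain \<Gamma> \<Delta> where s: "s = (\<Gamma>, insert (Box (Seq \<pi>0 \<pi>1) \<phi>) \<Delta>)"
    and ps: "ps = [(\<Gamma>, insert (Box \<pi>0 (Box \<pi>1 \<phi>)) \<Delta>)]"
    using assms(1) by auto
  from assms(2) have "\<not> sat R V w (Box (Seq \<pi>0 \<pi>1) \<phi>)" by (simp add: s falsifies_def)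
  have "falsifies w (ps ! 0)"
    using assms(2) by (simp add: s ps falsifies_def sat_Box_Seq del: sat.simps(4))
  moreover have "trace_descends (RSeqR \<pi>0 \<pi>1 \<phi>) 0 w w s (ps ! 0)"
    using refutation_height_Box_Seq[OF \<open>\<not> sat R V w (Box (Seq \<pi>0 \<pi>1) \<phi>)\<close>]
    by (rule trace_descends_principal[rotated]) auto
  ultimately show ?thesis by (rule has_falsified_premiseI) (simp add: ps)
qed

lemma falsified_premise_TestR:
  assumes "rule_inst (RTestR \<phi> \<psi>) ps s" "falsifies w s"
  shows "has_falsified_premise (RTestR \<phi> \<psi>) ps w s"
proof -
  obtain \<Gamma> \<Delta> where s: "s = (\<Gamma>, insert (Box (Test \<phi>) \<psi>) \<Delta>)" and ps: "ps = [(insert \<phi> \<Gamma>, insert \<psi> \<Delta>)]"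
    using assms(1) by auto
  from assms(2) have "\<not> sat R V w (Box (Test \<phi>) \<psi>)" by (simp add: s falsifies_def)
  have "falsifies w (ps ! 0)" using assms(2) by (auto simp: s ps falsifies_def)
  moreover have "trace_descends (RTestR \<phi> \<psi>) 0 w w s (ps ! 0)"
    using refutation_height_Box_Test[OF \<open>\<not> sat R V w (Box (Test \<phi>) \<psi>)\<close>]
    by (rule trace_descends_principal[rotated]) auto
  ultimately show ?thesis by (rule has_falsified_premiseI) (simp add: ps)
qed

text \<open>For the two-premise right rules the falsified premise whose new formula has the smaller
  refutation height is chosen; a premise that is merely false would not make the trace descend.\<close>

lemma falsified_premise_ChoiceR:
  assumes "rule_inst (RChoiceR \<pi>0 \<pi>1 \<phi>) ps s" "falsifies w s"
  shows "has_falsified_premise (RChoiceR \<pi>0 \<pi>1 \<phi>) ps w s"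
proof -
  obtain \<Gamma> \<Delta> where s: "s = (\<Gamma>, insert (Box (Choice \<pi>0 \<pi>1) \<phi>) \<Delta>)"
    and ps: "ps = [(\<Gamma>, insert (Box \<pi>0 \<phi>) \<Delta>), (\<Gamma>, insert (Box \<pi>1 \<phi>) \<Delta>)]"
    using assms(1) by auto
  from assms(2) have "\<not> sat R V w (Box (Choice \<pi>0 \<pi>1) \<phi>)" by (simp add: s falsifies_def)
  then show ?thesis
  proof (cases rule: refutation_height_Box_Choice)
    case left
    have "falsifies w (ps ! 0)" using left(1) assms(2) by (auto simp: s ps falsifies_def)
    moreover have "trace_descends (RChoiceR \<pi>0 \<pi>1 \<phi>) 0 w w s (ps ! 0)"
      using left(2) by (rule trace_descends_principal[rotated]) auto
    ultimately show ?thesis by (rule has_falsified_premiseI) (simp add: ps)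
  next
    case right
    have "falsifies w (ps ! 1)" using right(1) assms(2) by (auto simp: s ps falsifies_def)
    moreover have "trace_descends (RChoiceR \<pi>0 \<pi>1 \<phi>) 1 w w s (ps ! 1)"
      using right(2) by (rule trace_descends_principal[rotated]) auto
    ultimately show ?thesis by (rule has_falsified_premiseI) (simp add: ps)
  qed
qed

lemma falsified_premise_CS:
  assumes "rule_inst (RCS \<pi> \<phi>) ps s" "falsifies w s"
  shows "has_falsified_premise (RCS \<pi> \<phi>) ps w s"
proof -
  obtain \<Gamma> \<Delta> where s: "s = (\<Gamma>, insert (Box (Star \<pi>) \<phi>) \<Delta>)"
    and ps: "ps = [(\<Gamma>, insert \<phi> \<Delta>), (\<Gamma>, insert (Box \<pi> (Box (Star \<pi>) \<phi>)) \<Delta>)]"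
    using assms(1) by auto
  from assms(2) have "\<not> sat R V w (Box (Star \<pi>) \<phi>)" by (simp add: s falsifies_def)
  then show ?thesis
  proof (cases rule: refutation_height_Box_Star)
    case here
    have "falsifies w (ps ! 0)" using here(1) assms(2) by (auto simp: s ps falsifies_def)
    moreover have "trace_descends (RCS \<pi> \<phi>) 0 w w s (ps ! 0)"
      using here(2) by (rule trace_descends_principal[rotated]) auto
    ultimately show ?thesis by (rule has_falsified_premiseI) (simp add: ps)
  next
    case step
    have "falsifies w (ps ! 1)" using step(1) assms(2) by (auto simp: s ps falsifies_def)
    moreover have "trace_descends (RCS \<pi> \<phi>) 1 w w s (ps ! 1)"
      using step(2) by (rule trace_descends_principal[rotated]) auto
    ultimately show ?thesis by (rule has_falsified_premiseI) (simp add: ps)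
  qed
qed

lemma falsified_premise_Box:
  assumes "rule_inst (RBox \<pi> \<phi>) ps s" "falsifies w s"
  shows "has_falsified_premise (RBox \<pi> \<phi>) ps w s"
proof -
  obtain \<Gamma> \<Delta> where s: "s = (Box \<pi> ` \<Gamma>, insert (Box \<pi> \<phi>) \<Delta>)"
    and ps: "ps = [(\<Gamma>, insert \<phi> (BoxC \<pi> ` \<Delta>))]"
    using assms(1) by auto
  from assms(2) have "\<not> sat R V w (Box \<pi> \<phi>)" by (simp add: s falsifies_def)
  then obtain v where "(w, v) \<in> rel R V \<pi>" "\<not> sat R V v \<phi>"
    "refutation_height v \<phi> \<le> refutation_height w (Box \<pi> \<phi>)"
    by (rule refutation_height_Box)
  with assms(2) show ?thesis
    by (intro has_falsified_premiseI[of _ _ 0]) (auto simp: s ps falsifies_def trace_descends_def)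
qed

lemma falsified_premise_BoxC:
  assumes "rule_inst (RBoxC \<pi> \<phi>) ps s" "falsifies w s"
  shows "has_falsified_premise (RBoxC \<pi> \<phi>) ps w s"
proof -
  obtain \<Gamma> \<Delta> where s: "s = (BoxC \<pi> ` \<Gamma>, insert (BoxC \<pi> \<phi>) \<Delta>)"
    and ps: "ps = [(\<Gamma>, insert \<phi> (Box \<pi> ` \<Delta>))]"
    using assms(1) by auto
  from assms(2) have "\<not> sat R V w (BoxC \<pi> \<phi>)" by (simp add: s falsifies_def)
  then obtain v where "(v, w) \<in> rel R V \<pi>" "\<not> sat R V v \<phi>"
    "refutation_height v \<phi> < refutation_height w (BoxC \<pi> \<phi>)"
    by (rule refutation_height_BoxC)
  with assms(2) show ?thesis
    by (intro has_falsified_premiseI[of _ _ 0]) (auto simp: s ps falsifies_def trace_descends_def)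
qed

lemma falsified_premise:
  assumes "rule_inst r ps s" "falsifies w s"
  shows "has_falsified_premise r ps w s"
proof (cases "passive_rule r")
  case True
  from True assms show ?thesis by (rule falsified_premise_passive)
next
  case False
  with assms show ?thesis
    by (cases r) (auto simp del: rule_inst.simps intro: falsified_premise_ImpR
      falsified_premise_SeqR falsified_premise_TestR falsified_premise_ChoiceR falsified_premise_CS
      falsified_premise_Box falsified_premise_BoxC)
qed

section \<open>Infinite falsified paths\<close>

lemma subtree_append:
  "subtree T p = Some (Inf s r ts) \<Longrightarrow> j < length ts \<Longrightarrow> subtree T (p @ [j]) = Some (ts ! j)"
  by (induction p arbitrary: T) (auto split: ptree.splits if_splits)

lemma dg_edge_to_premise:
  assumes "pre_proof T" "subtree T p = Some (Inf s r ts)" "j < length ts"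
  obtains q r' ts' where "dg_edge T p j q" "subtree T q = Some (Inf (seq_of (ts ! j)) r' ts')"
proof (cases "ts ! j")
  case (Bud s' c)
  with assms(2,3) have "subtree T (p @ [j]) = Some (Bud s' c)" by (simp add: subtree_append)
  with assms(1) obtain r' ts' where "subtree T c = Some (Inf s' r' ts')"
    unfolding pre_proof_def by blast
  with that Bud assms(2,3) show ?thesis by (auto simp: dg_edge_def)
next
  case (Inf s' r' ts')
  with assms(2,3) have "subtree T (p @ [j]) = Some (Inf s' r' ts')" by (simp add: subtree_append)
  with that Inf assms(2,3) show ?thesis by (auto simp: dg_edge_def)
qed

definition falsified_node :: "('p,'a) ptree \<Rightarrow> 'w \<Rightarrow> nat list \<Rightarrow> bool" where
  "falsified_node T w q \<longleftrightarrow> (\<exists>s r ts. subtree T q = Some (Inf s r ts) \<and> falsifies w s)"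

lemma falsified_node_of_subtree:
  assumes "pre_proof T" "subtree T p = Some t" "falsifies w (seq_of t)"
  obtains q where "falsified_node T w q"
proof (cases t)
  case (Bud s c)
  with assms(1,2) obtain r ts where "subtree T c = Some (Inf s r ts)"
    unfolding pre_proof_def by blast
  with assms(3) Bud show ?thesis by (intro that[of c]) (auto simp: falsified_node_def)
next
  case (Inf s r ts)
  with assms(2,3) show ?thesis by (intro that[of p]) (auto simp: falsified_node_def)
qed

lemma falsified_node_step:
  assumes "pre_proof T" "falsified_node T w q"
  obtains j q' w' where "dg_edge T q j q'" "falsified_node T w' q'"
    "trace_descends (node_rule T q) j w w' (node_seq T q) (node_seq T q')"
proof -
  from assms(2) obtain s r ts where q: "subtree T q = Some (Inf s r ts)" and "falsifies w s"
    unfolding falsified_node_def by blast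
  from assms(1) q have "rule_inst r (map seq_of ts) s"
    unfolding pre_proof_def by blast
  then have "has_falsified_premise r (map seq_of ts) w s"
    using \<open>falsifies w s\<close> by (rule falsified_premise)
  then obtain j w' where j: "j < length ts" "falsifies w' (seq_of (ts ! j))"
    "trace_descends r j w w' s (seq_of (ts ! j))"
    unfolding has_falsified_premise_def by auto
  from assms(1) q j(1) obtain q' r' ts' where
    "dg_edge T q j q'" "subtree T q' = Some (Inf (seq_of (ts ! j)) r' ts')"
    by (rule dg_edge_to_premise)
  moreover have "falsified_node T w' q'"
    using \<open>subtree T q' = _\<close> j(2) unfolding falsified_node_def by blast
  ultimately show ?thesis
    using that q j(3) by (simp add: node_rule_def node_seq_def)
qed

lemma falsified_path:
  assumes "pre_proof T" "falsified_node T w q"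
  obtains ns ks ws where "\<forall>i. dg_edge T (ns i) (ks i) (ns (Suc i))"
    "\<forall>i. trace_descends (node_rule T (ns i)) (ks i) (ws i) (ws (Suc i))
      (node_seq T (ns i)) (node_seq T (ns (Suc i)))"
proof -
  define P where "P x \<longleftrightarrow> falsified_node T (snd x) (fst x)" for x :: "nat list \<times> 'w"
  define E where "E j x y \<longleftrightarrow> dg_edge T (fst x) j (fst y) \<and>
    trace_descends (node_rule T (fst x)) j (snd x) (snd y)
      (node_seq T (fst x)) (node_seq T (fst y))"
    for j and x y :: "nat list \<times> 'w"
  have "\<exists>f. \<forall>i. P (f i) \<and> (\<exists>j. E j (f i) (f (Suc i)))"
  proof (rule dependent_nat_choice[where P = "\<lambda>_. P" and Q = "\<lambda>_ x y. \<exists>j. E j x y"])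
    show "\<exists>x. P x" using assms(2) unfolding P_def by auto
  next
    fix x :: "nat list \<times> 'w" and i :: nat
    assume "P x"
    with assms(1) obtain j q' w' where "dg_edge T (fst x) j q'" "falsified_node T w' q'"
      "trace_descends (node_rule T (fst x)) j (snd x) w' (node_seq T (fst x)) (node_seq T q')"
      unfolding P_def by (rule falsified_node_step)
    then show "\<exists>y. P y \<and> (\<exists>j. E j x y)"
      unfolding P_def E_def by (intro exI[of _ "(q', w')"]) auto
  qed
  then obtain f where "\<forall>i. \<exists>j. E j (f i) (f (Suc i))" by blast
  then obtain ks where "\<forall>i. E (ks i) (f i) (f (Suc i))" by metis
  then show ?thesis unfolding E_def by (intro that[of "fst \<circ> f" ks "snd \<circ> f"]) simp_all
qed

lemma no_progressing_trace:
  assumes descends: "\<forall>i. trace_descends (rs i) (ks i) (ws i) (ws (Suc i)) (ss i) (ss (Suc i))"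
    and trace: "\<forall>i\<ge>m. \<tau> i \<in> snd (ss i) \<and> trace_step (rs i) (ks i) (\<tau> i) (\<tau> (Suc i))"
    and progress: "\<exists>\<^sub>\<infinity>i. m \<le> i \<and> progress (rs i) (ks i) (\<tau> i) (\<tau> (Suc i))"
  shows False
proof -
  define h where "h i = refutation_height (ws i) (\<tau> i)" for i
  have descent: "h (Suc i) \<le> h i \<and> (progress (rs i) (ks i) (\<tau> i) (\<tau> (Suc i)) \<longrightarrow> h (Suc i) < h i)"
    if "m \<le> i" for i
  proof -
    have "\<tau> i \<in> snd (ss i)" "\<tau> (Suc i) \<in> snd (ss (Suc i))"
      "trace_step (rs i) (ks i) (\<tau> i) (\<tau> (Suc i))"
      using trace that by auto
    with descends show ?thesis unfolding trace_descends_def h_def by blast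
  qed
  then have "\<forall>i\<ge>m. h (Suc i) \<le> h i" by blast
  moreover have "\<exists>\<^sub>\<infinity>i. h (Suc i) < h i"
    using progress by (rule INFM_mono) (use descent in blast)
  ultimately show False by (rule no_infinite_descent)
qed

end

theorem mainTheorem7:
  fixes T :: "('p,'a) ptree"
    and R :: "'a \<Rightarrow> ('w \<times> 'w) set" and V :: "'w \<Rightarrow> 'p set"
  assumes "cgtpdl_proof T"
    and "subtree T p = Some t"
  shows "valid_seq R V (seq_of t)"
proof (rule ccontr)
  assume "\<not> valid_seq R V (seq_of t)"
  then obtain w where "falsifies R V w (seq_of t)" by (auto simp: not_valid_seq_iff)
  from assms(1) have pre: "pre_proof T" and gtc: "global_trace_condition T"
    by (simp_all add: cgtpdl_proof_def)
  obtain q where "falsified_node R V T w q"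
    using pre assms(2) \<open>falsifies R V w (seq_of t)\<close> by (rule falsified_node_of_subtree)
  with pre obtain ns ks ws where edges: "\<forall>i. dg_edge T (ns i) (ks i) (ns (Suc i))"
    and descends: "\<forall>i. trace_descends R V (node_rule T (ns i)) (ks i) (ws i) (ws (Suc i))
      (node_seq T (ns i)) (node_seq T (ns (Suc i)))"
    by (rule falsified_path)
  from gtc edges obtain m \<tau> where
    trace: "\<forall>i\<ge>m. \<tau> i \<in> snd (node_seq T (ns i)) \<and>
      trace_step (node_rule T (ns i)) (ks i) (\<tau> i) (\<tau> (Suc i))"
    and progress: "\<exists>\<^sub>\<infinity>i. m \<le> i \<and> progress (node_rule T (ns i)) (ks i) (\<tau> i) (\<tau> (Suc i))"
    unfolding global_trace_condition_def by blast
  show False using descends trace progress by (rule no_progressing_trace)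
qed

end
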